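(* Assume that all random variables $Z_i(j)$ are centered, i.e. $\mathbb{E}Z_i(j)=0$. Then for $l\in\mathbb{N}$ (with $l\geq1$), $p\geq2$, $p\geq l$ and $A\geq2$, \[ \mathbb{E}\left[Z-AM\frac{\log(2N)}{n}\right]_+^l\leq\left(2\left(\frac2A\right)^{p-1}+(l!)^{\frac1l}\sqrt{\frac2n}+\frac1A+\frac{lA}{n}\right)^lM^l. \]
   Context: Let $n,N$ be positive integers and $\mathcal{Z}_1,\dots,\mathcal{Z}_n$ probability spaces; all random variables live on the product space with the product measure. For $1\leq i\leq n$, $1\leq j\leq N$ let $Z_i(j):\mathcal{Z}_i\to\mathbb{R}$ be random variables (independent across $i$, not necessarily identically distributed), $Z:=\max_{1\leq j\leq N}\left|\frac1n\sum_{i=1}^nZ_i(j)\right|$. Let $\mathcal{E}_i:\mathcal{Z}_i\to\mathbb{R}$ satisfy $|Z_i(j)|\leq\mathcal{E}_i$ for all $i,j$, and assume there are $p\in[1,\infty)$ and $M>0$ with $\mathbb{E}\mathcal{E}_i^p\leq M^p$ for all $i$. Notation: $(x)_+^l:=(\max\{0,x\})^l$; $\log$ is the natural logarithm. *)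

theory Defs
  imports "HOL-Probability.Probability"
begin

definition maxmean :: "nat \<Rightarrow> nat \<Rightarrow> (nat \<Rightarrow> nat \<Rightarrow> 'a \<Rightarrow> real) \<Rightarrow> (nat \<Rightarrow> 'a) \<Rightarrow> real" where
  "maxmean n N Z w = Max ((\<lambda>j. \<bar>(1 / real n) * (\<Sum>i\<in>{1..n}. Z i j (w i))\<bar>) ` {1..N})"

end

theory Submission
  imports Defs
begin

text \<open>Truncate every summand at the level \<open>T = A M / 2\<close> of its envelope. The truncated parts are
  bounded by \<open>T\<close> and have second moment at most \<open>M\<^sup>2\<close>, so their centered means have a
  Bernstein-type exponential moment; with \<open>x\<^sup>l \<le> l! e\<^sup>x\<close> and a union bound over the \<open>2N\<close>
  signed means this controls the \<open>l\<close>-th moment of the excess of their maximum over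
  \<open>A M log(2N)/n\<close>. The remainders are dominated by \<open>E\<^sub>i 1{E\<^sub>i > T}\<close>, whose moments of
  order \<open>m \<le> p\<close> are at most \<open>T\<^sup>m (M/T)\<^sup>p\<close>; this bounds the bias of the truncated means and,
  by a binomial induction over the independent coordinates, the \<open>l\<close>-th moment of their average.
  A Minkowski inequality for \<open>l\<close>-th moments adds the three contributions.\<close>

section \<open>Elementary real inequalities\<close>

lemma exp_le_quadratic_of_nonpos:
  fixes x :: real assumes "x \<le> 0" shows "exp x \<le> 1 + x + x\<^sup>2 / 2"
proof -
  obtain t where t: "exp x = (\<Sum>m<3. x ^ m / fact m) + exp t / fact 3 * x ^ 3"
    using Maclaurin_exp_le[of x 3] by blast
  have "exp t / fact 3 * x ^ 3 \<le> 0"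
    using assms by (intro mult_nonneg_nonpos) (auto simp: power_le_zero_eq)
  moreover have "(\<Sum>m<3. x ^ m / fact m) = 1 + x + x\<^sup>2 / 2"
    by (simp add: eval_nat_numeral)
  ultimately show ?thesis using t by linarith
qed

lemma exp_le_quadratic_of_abs_le_1:
  fixes x :: real assumes "\<bar>x\<bar> \<le> 1" shows "exp x \<le> 1 + x + x\<^sup>2"
proof (cases "x \<ge> 0")
  case True
  then show ?thesis using exp_bound assms by auto
next
  case False
  then show ?thesis using exp_le_quadratic_of_nonpos[of x] zero_le_power2[of x] by linarith
qed

text \<open>Taylor to order five, with \<open>e\<^sup>2 < 7.4\<close> and \<open>1/2 + 2/6 + 4/24 + 7.4 \<cdot> 8/120 < 3/2\<close>.\<close>

lemma exp_le_quadratic_of_abs_le_2: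
  fixes x :: real assumes "\<bar>x\<bar> \<le> 2" shows "exp x \<le> 1 + x + 3/2 * x\<^sup>2"
proof (cases "x \<ge> 0")
  case nonneg: True
  obtain t where t: "\<bar>t\<bar> \<le> \<bar>x\<bar>" "exp x = (\<Sum>m<5. x ^ m / fact m) + exp t / fact 5 * x ^ 5"
    using Maclaurin_exp_le[of x 5] by blast
  have "exp t \<le> exp 1 * exp 1"
    using t(1) assms by (simp flip: exp_add)
  also have "\<dots> \<le> 2.72 * 2.72"
    using e_less_272 by (intro mult_mono) auto
  finally have exp_t: "exp t \<le> 7.4" by simp
  have power_le: "x ^ (k + 2) \<le> 2 ^ k * x\<^sup>2" for k
  proof -
    have "x ^ k \<le> 2 ^ k" using nonneg assms by (intro power_mono) auto
    then have "x ^ k * x\<^sup>2 \<le> 2 ^ k * x\<^sup>2" by (rule mult_right_mono) simp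
    then show ?thesis by (simp only: power_add)
  qed
  have "x ^ 3 \<le> 2 * x\<^sup>2" "x ^ 4 \<le> 4 * x\<^sup>2" "x ^ 5 \<le> 8 * x\<^sup>2"
    using power_le[of 1] power_le[of 2] power_le[of 3] by (simp_all add: eval_nat_numeral)
  moreover have "exp t * x ^ 5 \<le> 7.4 * (8 * x\<^sup>2)"
    using exp_t calculation(3) nonneg by (intro mult_mono) auto
  moreover have "exp x = 1 + x + x\<^sup>2/2 + x ^ 3/6 + x ^ 4/24 + exp t * x ^ 5 / 120"
    using t(2) by (simp add: eval_nat_numeral fact_numeral)
  ultimately show ?thesis
    using zero_le_power2[of x] by linarith
next
  case False
  then show ?thesis using exp_le_quadratic_of_nonpos[of x] zero_le_power2[of x] by linarith
qed

lemma pos_part_power_le_fact_exp: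
  fixes x :: real assumes "l \<ge> 1" shows "(max 0 x) ^ l \<le> fact l * exp x"
proof (cases "x \<ge> 0")
  case True
  obtain t where t: "exp x = (\<Sum>m<Suc l. x ^ m / fact m) + exp t / fact (Suc l) * x ^ Suc l"
    using Maclaurin_exp_le[of x "Suc l"] by blast
  have "x ^ l / fact l \<le> (\<Sum>m<Suc l. x ^ m / fact m)"
    using True by (intro member_le_sum[where f = "\<lambda>m. x ^ m / fact m"]) auto
  moreover have "0 \<le> exp t / fact (Suc l) * x ^ Suc l" using True by simp
  ultimately have "x ^ l / fact l \<le> exp x" using t by linarith
  then show ?thesis using True by (simp add: divide_le_eq mult.commute)
next
  case False
  then show ?thesis using assms by (simp add: max_def zero_power)
qed

lemma power_convex_combination3:
  fixes x y z a b c :: real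
  assumes "0 \<le> x" "0 \<le> y" "0 \<le> z" "0 \<le> a" "0 \<le> b" "0 \<le> c" "a + b + c = 1"
  shows "(a * x + b * y + c * z) ^ l \<le> a * x ^ l + b * y ^ l + c * z ^ l"
proof -
  have convex: "convex_on {0..} (\<lambda>x::real. x ^ l)"
    by (cases "even l") (auto intro: convex_on_subset[OF convex_power_even] convex_power_odd)
  define w where "w = (\<lambda>i::nat. if i = 0 then a else if i = 1 then b else c)"
  define v where "v = (\<lambda>i::nat. if i = 0 then x else if i = 1 then y else z)"
  have "(\<Sum>i\<in>{0,1,2}. w i *\<^sub>R v i) ^ l \<le> (\<Sum>i\<in>{0,1,2}. w i * v i ^ l)"
    by (rule convex_on_sum[OF _ _ convex]) (use assms in \<open>auto simp: w_def v_def\<close>)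
  then show ?thesis by (simp add: w_def v_def add_ac)
qed

lemma square_le_Young:
  fixes y p :: real assumes "0 \<le> y" "p \<ge> 2"
  shows "y\<^sup>2 \<le> 2 / p * y powr p + (1 - 2 / p)"
proof (cases "y = 0")
  case False
  then have "(y powr p) powr (2 / p) * 1 powr (1 - 2 / p) \<le> 2 / p * y powr p + (1 - 2 / p) * 1"
    using assms by (intro Youngs_inequality_0) auto
  moreover have "(y powr p) powr (2 / p) = y\<^sup>2"
    using assms False by (simp add: powr_powr powr_realpow)
  ultimately show ?thesis by simp
qed (use assms in simp)

lemma power_add_ge_Bernoulli:
  fixes a q :: real assumes "0 < a" "0 \<le> q"
  shows "a ^ j + real j * q * a ^ (j - 1) \<le> (a + q) ^ j"
proof (cases j)
  case (Suc k)
  have "1 + real j * (q / a) \<le> (1 + q / a) ^ j"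
    using assms by (intro Bernoulli_inequality) (simp add: order.trans[of _ 0])
  then have "a ^ j * (1 + real j * (q / a)) \<le> a ^ j * (1 + q / a) ^ j"
    using assms by (intro mult_left_mono) auto
  moreover have "a ^ j * (1 + q / a) ^ j = (a + q) ^ j"
    using assms by (simp add: power_mult_distrib[symmetric] field_simps)
  moreover have "a ^ j * (1 + real j * (q / a)) = a ^ j + real j * q * a ^ (j - 1)"
    using assms Suc by (simp add: field_simps)
  ultimately show ?thesis by simp
qed simp

lemma power_diff_le_mean_value:
  fixes a b :: real assumes "0 < a" "0 \<le> b" "b \<le> a"
  shows "a ^ j - b ^ j \<le> real j * a ^ (j - 1) * (a - b)"
proof (cases j)
  case (Suc k)
  have "1 + real j * (- (a - b) / a) \<le> (1 + (- (a - b) / a)) ^ j"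
    using assms by (intro Bernoulli_inequality) (simp add: le_divide_eq)
  then have "a ^ j * (1 + real j * (- (a - b) / a)) \<le> a ^ j * (b / a) ^ j"
    using assms by (intro mult_left_mono) (auto simp: field_simps)
  moreover have "a ^ j * (b / a) ^ j = b ^ j"
    using assms by (simp add: power_divide)
  moreover have "a ^ j * (1 + real j * (- (a - b) / a)) = a ^ j - real j * a ^ (j - 1) * (a - b)"
    using assms Suc by (simp add: field_simps)
  ultimately show ?thesis by simp
qed simp

lemma binomial_moment_recursion:
  fixes x q :: real assumes "0 \<le> x" "0 \<le> q"
  shows "(x + real j) ^ j + q * (\<Sum>k<j. real (j choose k) * (x + real k) ^ k) \<le> (x + q + real j) ^ j"
proof (cases j)
  case (Suc m)
  define y where "y = x + real m"
  have "(\<Sum>k<j. real (j choose k) * (x + real k) ^ k) \<le> (\<Sum>k<j. real (j choose k) * y ^ k)"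
    using Suc assms by (intro sum_mono mult_left_mono power_mono) (auto simp: y_def)
  also have "\<dots> = (y + 1) ^ j - y ^ j"
    using binomial_ring[of y 1 j] by (simp add: lessThan_Suc_atMost[symmetric] Suc)
  also have "\<dots> \<le> real j * (x + real j) ^ (j - 1)"
    using power_diff_le_mean_value[of "y + 1" y j] assms Suc by (simp add: y_def add_ac)
  finally have "q * (\<Sum>k<j. real (j choose k) * (x + real k) ^ k) \<le> real j * q * (x + real j) ^ (j - 1)"
    using assms mult_left_mono by (fastforce simp: mult_ac)
  moreover have "(x + real j) ^ j + real j * q * (x + real j) ^ (j - 1) \<le> (x + real j + q) ^ j"
    using power_add_ge_Bernoulli[of "x + real j" q j] assms Suc by simp
  ultimately show ?thesis by (simp add: add_ac)
qed simp

lemma fact_root_power: "1 \<le> l \<Longrightarrow> (fact l powr (1 / real l)) ^ l = (fact l :: real)"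
  by (simp add: powr_realpow[symmetric] powr_powr)

lemma fact_root_bounds:
  assumes "1 \<le> l" shows "1 \<le> fact l powr (1 / real l)" "fact l powr (1 / real l) \<le> real l"
proof -
  show "1 \<le> fact l powr (1 / real l)"
    by (rule ge_one_powr_ge_zero) auto
  have "fact l powr (1 / real l) \<le> (real l ^ l) powr (1 / real l)"
    using fact_le_power[of l, where 'a = real] by (intro powr_mono2) auto
  also have "\<dots> = real l"
    using assms by (simp add: powr_realpow[symmetric] powr_powr)
  finally show "fact l powr (1 / real l) \<le> real l" .
qed

text \<open>The pair \<open>(\<kappa>, C)\<close> is \<open>(1, 1)\<close> if \<open>A\<^sup>2 \<le> 2n\<close> and \<open>(2, 3/2)\<close> otherwise; this case split is
  where the term \<open>(l!)\<^bsup>1/l\<^esup> \<surd>(2/n)\<close> of the final bound comes from.\<close>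

lemma exp_quadratic_bound_parameters:
  fixes n A G :: real
  assumes "0 < n" "0 < A" "1 \<le> G" "G \<le> real l"
  obtains \<kappa> C :: real where "1 \<le> \<kappa>" "0 \<le> C" "\<And>y. \<bar>y\<bar> \<le> \<kappa> \<Longrightarrow> exp y \<le> 1 + y + C * y\<^sup>2"
    and "G * A / (n * \<kappa>) + real l * A / (2 * n) + C * \<kappa> / A \<le> G * sqrt (2 / n) + 1 / A + real l * A / n"
proof (cases "A\<^sup>2 \<le> 2 * n")
  case True
  have "A / n \<le> sqrt (2 / n)"
  proof (rule real_le_rsqrt)
    show "(A / n)\<^sup>2 \<le> 2 / n"
      using True assms by (simp add: power_divide divide_le_eq power2_eq_square field_simps)
  qed
  then have "G * A / (n * 1) \<le> G * sqrt (2 / n)"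
    using mult_left_mono[of "A / n" "sqrt (2 / n)" G] assms by simp
  moreover have "real l * A / (2 * n) \<le> real l * A / n"
    using assms by (simp add: divide_le_eq field_simps)
  ultimately show ?thesis
    using exp_le_quadratic_of_abs_le_1 by (intro that[of 1 1]) auto
next
  case False
  have "2 / A \<le> sqrt (2 / n)"
  proof (rule real_le_rsqrt)
    show "(2 / A)\<^sup>2 \<le> 2 / n"
      using False assms by (simp add: power_divide divide_le_eq power2_eq_square field_simps)
  qed
  also have "\<dots> \<le> G * sqrt (2 / n)"
    using assms by (simp add: mult_le_cancel_right1)
  finally have "3 / 2 * 2 / A \<le> G * sqrt (2 / n) + 1 / A"
    by simp
  moreover have "G * A / (n * 2) \<le> real l * A / (2 * n)"
    using assms by (simp add: divide_right_mono mult.commute mult_right_mono)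
  ultimately show ?thesis
    using exp_le_quadratic_of_abs_le_2 by (intro that[of 2 "3 / 2"]) (auto simp: field_simps)
qed

section \<open>Moment bounds on a single probability space\<close>

context prob_space
begin

lemma nn_integral_le_affine_bound:
  assumes f[measurable]: "f \<in> borel_measurable M"
    and h: "\<And>x. x \<in> space M \<Longrightarrow> h x \<le> \<alpha> * f x + \<gamma>"
    and f_nonneg: "\<And>x. x \<in> space M \<Longrightarrow> 0 \<le> f x"
    and "0 \<le> \<alpha>" "0 \<le> \<gamma>" "0 \<le> a"
    and f_int: "(\<integral>\<^sup>+ x. ennreal (f x) \<partial>M) \<le> ennreal a"
  shows "(\<integral>\<^sup>+ x. ennreal (h x) \<partial>M) \<le> ennreal (\<alpha> * a + \<gamma>)"
proof -
  have "(\<integral>\<^sup>+ x. ennreal (h x) \<partial>M) \<le> (\<integral>\<^sup>+ x. ennreal \<alpha> * ennreal (f x) + ennreal \<gamma> \<partial>M)"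
    using assms by (intro nn_integral_mono) (simp flip: ennreal_mult ennreal_plus add: ennreal_leI)
  also have "\<dots> = ennreal \<alpha> * (\<integral>\<^sup>+ x. ennreal (f x) \<partial>M) + ennreal \<gamma>"
    by (simp add: nn_integral_add nn_integral_cmult emeasure_space_1)
  also have "\<dots> \<le> ennreal \<alpha> * ennreal a + ennreal \<gamma>"
    using f_int by (intro add_mono mult_left_mono) auto
  finally show ?thesis
    using assms by (simp flip: ennreal_mult ennreal_plus)
qed

lemma nn_integral_tail_power_le:
  assumes E[measurable]: "E \<in> borel_measurable M"
    and moment: "(\<integral>\<^sup>+ x. ennreal (E x powr p) \<partial>M) \<le> ennreal (B powr p)"
    and "0 < T" "0 \<le> B" "1 \<le> m" "real m \<le> p"
  shows "(\<integral>\<^sup>+ x. ennreal (((if T < E x then E x else 0) / T) ^ m) \<partial>M) \<le> ennreal ((B / T) powr p)"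
proof -
  have "((if T < E x then E x else 0) / T) ^ m \<le> 1 / T powr p * E x powr p + 0" for x
  proof (cases "T < E x")
    case True
    then have "(E x / T) ^ m \<le> (E x / T) powr p"
      using assms by (auto simp: powr_realpow[symmetric] intro: powr_mono)
    then show ?thesis
      using True assms by (simp add: powr_divide)
  qed (use assms in \<open>simp add: zero_power\<close>)
  then have "(\<integral>\<^sup>+ x. ennreal (((if T < E x then E x else 0) / T) ^ m) \<partial>M)
      \<le> ennreal (1 / T powr p * B powr p + 0)"
    using assms by (intro nn_integral_le_affine_bound[OF _ _ _ _ _ _ moment]) auto
  then show ?thesis
    using assms by (simp add: powr_divide)
qed

lemma nn_integral_square_le_of_moment:
  assumes E[measurable]: "E \<in> borel_measurable M"
    and E_nonneg: "\<And>x. x \<in> space M \<Longrightarrow> 0 \<le> E x"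
    and moment: "(\<integral>\<^sup>+ x. ennreal (E x powr p) \<partial>M) \<le> ennreal (B powr p)"
    and "2 \<le> p" "0 < B"
  shows "(\<integral>\<^sup>+ x. ennreal ((E x)\<^sup>2) \<partial>M) \<le> ennreal (B\<^sup>2)"
proof -
  have "(E x)\<^sup>2 \<le> 2 / p * B\<^sup>2 / B powr p * E x powr p + (1 - 2 / p) * B\<^sup>2"
    if "x \<in> space M" for x
  proof -
    have "(E x / B)\<^sup>2 \<le> 2 / p * (E x / B) powr p + (1 - 2 / p)"
      using square_le_Young[of "E x / B" p] E_nonneg[OF that] assms by simp
    then have "B\<^sup>2 * (E x / B)\<^sup>2 \<le> B\<^sup>2 * (2 / p * (E x / B) powr p + (1 - 2 / p))"
      by (rule mult_left_mono) simp
    then show ?thesis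
      using assms E_nonneg[OF that] by (simp add: powr_divide power_divide field_simps)
  qed
  then have "(\<integral>\<^sup>+ x. ennreal ((E x)\<^sup>2) \<partial>M)
      \<le> ennreal (2 / p * B\<^sup>2 / B powr p * B powr p + (1 - 2 / p) * B\<^sup>2)"
    using assms by (intro nn_integral_le_affine_bound[OF _ _ _ _ _ _ moment]) auto
  also have "2 / p * B\<^sup>2 / B powr p * B powr p + (1 - 2 / p) * B\<^sup>2 = B\<^sup>2"
    using assms by (simp add: field_simps)
  finally show ?thesis .
qed

lemma abs_truncated_mean_le:
  assumes X[measurable]: "X \<in> borel_measurable M" and E[measurable]: "E \<in> borel_measurable M"
    and envelope: "\<And>x. x \<in> space M \<Longrightarrow> \<bar>X x\<bar> \<le> E x"
    and moment: "(\<integral>\<^sup>+ x. ennreal (E x powr p) \<partial>M) \<le> ennreal (B powr p)"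
    and centered: "(\<integral> x. X x \<partial>M) = 0"
    and "0 < T" "0 \<le> B" "1 \<le> p"
  shows "\<bar>\<integral> x. (if E x \<le> T then X x else 0) \<partial>M\<bar> \<le> T * (B / T) powr p"
proof -
  define tail where "tail x = (if T < E x then E x else 0)" for x
  have scaled_tail: "(\<integral>\<^sup>+ x. ennreal (tail x / T) \<partial>M) \<le> ennreal ((B / T) powr p)"
    using nn_integral_tail_power_le[OF E moment, of T 1] assms by (simp add: tail_def)
  have "norm (X x) \<le> T * (tail x / T) + T" if "x \<in> space M" for x
    using envelope[OF that] \<open>0 < T\<close> by (auto simp: tail_def)
  then have "(\<integral>\<^sup>+ x. ennreal (norm (X x)) \<partial>M) \<le> ennreal (T * (B / T) powr p + T)"
    using assms by (intro nn_integral_le_affine_bound[OF _ _ _ _ _ _ scaled_tail]) (auto simp: tail_def)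
  then have "integrable M X"
    by (intro integrableI_bounded) (auto intro: le_less_trans)
  moreover have trunc_int: "integrable M (\<lambda>x. if E x \<le> T then X x else 0)"
    using envelope \<open>0 < T\<close> by (intro integrable_const_bound[where B = T]) (auto intro!: AE_I2 intro: order.trans)
  ultimately have "ennreal \<bar>\<integral> x. (if E x \<le> T then X x else 0) \<partial>M\<bar>
      = ennreal (norm (\<integral> x. X x - (if E x \<le> T then X x else 0) \<partial>M))"
    using centered by simp
  also have "\<dots> \<le> (\<integral>\<^sup>+ x. ennreal (norm (X x - (if E x \<le> T then X x else 0))) \<partial>M)"
    using \<open>integrable M X\<close> trunc_int by (intro integral_norm_bound_ennreal) auto
  also have "\<dots> \<le> ennreal (T * (B / T) powr p + 0)"
    using envelope assms
    by (intro nn_integral_le_affine_bound[OF _ _ _ _ _ _ scaled_tail]) (auto simp: tail_def)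
  finally show ?thesis
    using assms by (simp add: ennreal_le_iff)
qed

lemma nn_integral_exp_centered_le:
  assumes a[measurable]: "a \<in> borel_measurable M"
    and bounded: "\<And>x. x \<in> space M \<Longrightarrow> \<bar>a x\<bar> \<le> T"
    and second_moment: "(\<integral> x. (a x)\<^sup>2 \<partial>M) \<le> \<sigma>\<^sup>2"
    and exp_bound: "\<And>y. \<bar>y\<bar> \<le> \<kappa> \<Longrightarrow> exp y \<le> 1 + y + C * y\<^sup>2"
    and "0 \<le> C" and s: "\<bar>s\<bar> * (2 * T) \<le> \<kappa>"
  shows "(\<integral>\<^sup>+ x. ennreal (exp (s * (a x - (\<integral> y. a y \<partial>M)))) \<partial>M) \<le> ennreal (exp (C * s\<^sup>2 * \<sigma>\<^sup>2))"
proof -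
  define \<mu> where "\<mu> = (\<integral> y. a y \<partial>M)"
  define f where "f x = 1 + s * (a x - \<mu>) + C * s\<^sup>2 * (a x - \<mu>)\<^sup>2" for x
  have a_int: "integrable M a"
    using bounded by (intro integrable_const_bound[where B = T]) auto
  have a2_int: "integrable M (\<lambda>x. (a x)\<^sup>2)"
    using power_mono[OF bounded abs_ge_zero, of _ 2]
    by (intro integrable_const_bound[where B = "T\<^sup>2"]) auto
  have "\<bar>\<mu>\<bar> \<le> T"
    using bounded a_int unfolding \<mu>_def
    by (intro order.trans[OF integral_abs_bound] integral_le_const) auto
  have exp_le_f: "exp (s * (a x - \<mu>)) \<le> f x" if "x \<in> space M" for x
  proof -
    have "\<bar>s\<bar> * \<bar>a x - \<mu>\<bar> \<le> \<bar>s\<bar> * (2 * T)"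
      using bounded[OF that] \<open>\<bar>\<mu>\<bar> \<le> T\<close> by (intro mult_left_mono) auto
    then have "\<bar>s * (a x - \<mu>)\<bar> \<le> \<kappa>" using s by (simp add: abs_mult)
    from exp_bound[OF this] show ?thesis by (simp add: f_def power_mult_distrib mult_ac)
  qed
  have f_int: "integrable M f"
    unfolding f_def using a_int a2_int by (simp add: power2_diff algebra_simps)
  have "(\<integral>\<^sup>+ x. ennreal (exp (s * (a x - \<mu>))) \<partial>M) \<le> (\<integral>\<^sup>+ x. ennreal (f x) \<partial>M)"
    using exp_le_f by (intro nn_integral_mono ennreal_leI) auto
  also have "\<dots> = ennreal (\<integral> x. f x \<partial>M)"
    using exp_le_f by (intro nn_integral_eq_integral[OF f_int]) (auto intro: order.trans[OF exp_ge_zero])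
  also have "(\<integral> x. f x \<partial>M) = 1 + C * s\<^sup>2 * ((\<integral> x. (a x)\<^sup>2 \<partial>M) - \<mu>\<^sup>2)"
    unfolding f_def using a_int a2_int
    by (simp add: power2_diff algebra_simps \<mu>_def[symmetric] power2_eq_square prob_space)
  also have "\<dots> \<le> 1 + C * s\<^sup>2 * \<sigma>\<^sup>2"
  proof -
    have "(\<integral> x. (a x)\<^sup>2 \<partial>M) - \<mu>\<^sup>2 \<le> \<sigma>\<^sup>2"
      using second_moment zero_le_power2[of \<mu>] by linarith
    then show ?thesis using \<open>0 \<le> C\<close> by (intro add_left_mono mult_left_mono) auto
  qed
  also have "\<dots> \<le> exp (C * s\<^sup>2 * \<sigma>\<^sup>2)"
    by (rule exp_ge_add_one_self)
  finally show ?thesis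
    by (simp add: \<mu>_def ennreal_leI)
qed

text \<open>Minkowski's inequality in \<open>L\<^sup>l\<close> with a constant summand, by convexity of \<open>x\<^sup>l\<close> for the
  weights \<open>a/S, b/S, k/S\<close> with \<open>S = a + b + k\<close>.\<close>

lemma nn_integral_power_le_of_decomposition:
  assumes F[measurable]: "F \<in> borel_measurable M" and R[measurable]: "R \<in> borel_measurable M"
    and nonneg: "\<And>x. x \<in> space M \<Longrightarrow> 0 \<le> F x \<and> 0 \<le> R x \<and> 0 \<le> X x"
    and decomposition: "\<And>x. x \<in> space M \<Longrightarrow> X x \<le> F x + R x + k"
    and F_moment: "(\<integral>\<^sup>+ x. ennreal (F x ^ l) \<partial>M) \<le> ennreal (a ^ l)"
    and R_moment: "(\<integral>\<^sup>+ x. ennreal (R x ^ l) \<partial>M) \<le> ennreal (b ^ l)"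
    and "0 < a" "0 < b" "0 \<le> k"
  shows "(\<integral>\<^sup>+ x. ennreal (X x ^ l) \<partial>M) \<le> ennreal ((a + b + k) ^ l)"
proof -
  define S where "S = a + b + k"
  define \<alpha> where "\<alpha> = a / S * (S / a) ^ l"
  define \<beta> where "\<beta> = b / S * (S / b) ^ l"
  have "S > 0" "0 \<le> \<alpha>" "0 \<le> \<beta>"
    using assms by (auto simp: S_def \<alpha>_def \<beta>_def)
  have weights: "a / S + b / S + k / S = 1"
    using \<open>S > 0\<close> by (simp add: S_def add_divide_distrib[symmetric])
  have pointwise: "X x ^ l \<le> 1 * (\<alpha> * F x ^ l + \<beta> * R x ^ l) + k / S * S ^ l" if "x \<in> space M" for x
  proof -
    have "X x ^ l \<le> (a / S * (S / a * F x) + b / S * (S / b * R x) + k / S * S) ^ l"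
      using nonneg[OF that] decomposition[OF that] assms \<open>S > 0\<close> by (intro power_mono) auto
    also have "\<dots> \<le> a / S * (S / a * F x) ^ l + b / S * (S / b * R x) ^ l + k / S * S ^ l"
      using nonneg[OF that] assms \<open>S > 0\<close> weights by (intro power_convex_combination3) auto
    finally show ?thesis
      unfolding \<alpha>_def \<beta>_def power_mult_distrib by (simp add: mult_ac)
  qed
  have "(\<integral>\<^sup>+ x. ennreal (\<alpha> * F x ^ l + \<beta> * R x ^ l) \<partial>M)
      = ennreal \<alpha> * (\<integral>\<^sup>+ x. ennreal (F x ^ l) \<partial>M) + ennreal \<beta> * (\<integral>\<^sup>+ x. ennreal (R x ^ l) \<partial>M)"
  proof -
    have "(\<integral>\<^sup>+ x. ennreal (\<alpha> * F x ^ l + \<beta> * R x ^ l) \<partial>M)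
        = (\<integral>\<^sup>+ x. ennreal \<alpha> * ennreal (F x ^ l) + ennreal \<beta> * ennreal (R x ^ l) \<partial>M)"
      using nonneg \<open>0 \<le> \<alpha>\<close> \<open>0 \<le> \<beta>\<close> by (intro nn_integral_cong) (simp add: ennreal_mult ennreal_plus)
    then show ?thesis
      by (simp add: nn_integral_add nn_integral_cmult)
  qed
  also have "\<dots> \<le> ennreal \<alpha> * ennreal (a ^ l) + ennreal \<beta> * ennreal (b ^ l)"
    using F_moment R_moment by (intro add_mono mult_left_mono) auto
  also have "\<dots> = ennreal (\<alpha> * a ^ l + \<beta> * b ^ l)"
    using assms \<open>0 \<le> \<alpha>\<close> \<open>0 \<le> \<beta>\<close> by (simp add: ennreal_mult ennreal_plus)
  finally have combined: "(\<integral>\<^sup>+ x. ennreal (\<alpha> * F x ^ l + \<beta> * R x ^ l) \<partial>M)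
      \<le> ennreal (\<alpha> * a ^ l + \<beta> * b ^ l)" .
  have "(\<integral>\<^sup>+ x. ennreal (X x ^ l) \<partial>M) \<le> ennreal (1 * (\<alpha> * a ^ l + \<beta> * b ^ l) + k / S * S ^ l)"
    using assms \<open>0 \<le> \<alpha>\<close> \<open>0 \<le> \<beta>\<close> \<open>S > 0\<close> pointwise
    by (intro nn_integral_le_affine_bound[OF _ _ _ _ _ _ combined]) auto
  also have "1 * (\<alpha> * a ^ l + \<beta> * b ^ l) + k / S * S ^ l = (a / S + b / S + k / S) * S ^ l"
    using assms by (simp add: \<alpha>_def \<beta>_def power_divide algebra_simps)
  also have "\<dots> = S ^ l"
    using weights by simp
  finally show ?thesis
    by (simp add: S_def)
qed

lemma nn_integral_excess_max_abs_power_le: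
  assumes "finite J" "J \<noteq> {}"
    and Y[measurable]: "\<And>j. j \<in> J \<Longrightarrow> Y j \<in> borel_measurable M"
    and mgf: "\<And>j s. j \<in> J \<Longrightarrow> \<bar>s\<bar> = \<theta> \<Longrightarrow> (\<integral>\<^sup>+ x. ennreal (exp (s * Y j x)) \<partial>M) \<le> ennreal (exp v)"
    and "0 < \<theta>" "1 \<le> l"
  shows "(\<integral>\<^sup>+ x. ennreal ((max 0 (Max ((\<lambda>j. \<bar>Y j x\<bar>) ` J) - t)) ^ l) \<partial>M)
    \<le> ennreal (fact l / \<theta> ^ l * exp (- \<theta> * t) * (2 * real (card J) * exp v))"
proof -
  define f where "f x = (\<Sum>j\<in>J. exp (\<theta> * Y j x) + exp ((- \<theta>) * Y j x))" for x
  have f_int: "(\<integral>\<^sup>+ x. ennreal (f x) \<partial>M) \<le> ennreal (2 * real (card J) * exp v)"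
  proof -
    have "(\<integral>\<^sup>+ x. ennreal (f x) \<partial>M)
        = (\<Sum>j\<in>J. (\<integral>\<^sup>+ x. ennreal (exp (\<theta> * Y j x)) \<partial>M) + (\<integral>\<^sup>+ x. ennreal (exp ((- \<theta>) * Y j x)) \<partial>M))"
      unfolding f_def using \<open>finite J\<close>
      by (subst sum_ennreal[symmetric], simp, subst nn_integral_sum, simp_all add: nn_integral_add)
    also have "\<dots> \<le> (\<Sum>j\<in>J. ennreal (exp v) + ennreal (exp v))"
      using \<open>0 < \<theta>\<close> by (intro sum_mono add_mono mgf) auto
    finally show ?thesis
      by (simp add: ennreal_plus[symmetric] ennreal_of_nat_eq_real_of_nat ennreal_mult[symmetric] mult_ac
        del: ennreal_plus)
  qed
  have "(max 0 (Max ((\<lambda>j. \<bar>Y j x\<bar>) ` J) - t)) ^ l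
      \<le> fact l / \<theta> ^ l * exp (- \<theta> * t) * f x + 0" if "x \<in> space M" for x
  proof -
    have "Max ((\<lambda>j. \<bar>Y j x\<bar>) ` J) \<in> (\<lambda>j. \<bar>Y j x\<bar>) ` J"
      using \<open>finite J\<close> \<open>J \<noteq> {}\<close> by (intro Max_in) auto
    then obtain j where j: "j \<in> J" "Max ((\<lambda>j. \<bar>Y j x\<bar>) ` J) = \<bar>Y j x\<bar>"
      by auto
    have "\<theta> ^ l * (max 0 (\<bar>Y j x\<bar> - t)) ^ l = (max 0 (\<theta> * \<bar>Y j x\<bar> - \<theta> * t)) ^ l"
      using \<open>0 < \<theta>\<close> by (simp add: power_mult_distrib[symmetric] max_mult_distrib_left right_diff_distrib)
    also have "\<dots> \<le> fact l * (exp (- \<theta> * t) * exp (\<theta> * \<bar>Y j x\<bar>))"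
      using pos_part_power_le_fact_exp[OF \<open>1 \<le> l\<close>] by (simp flip: exp_add)
    also have "exp (\<theta> * \<bar>Y j x\<bar>) \<le> f x"
      unfolding f_def using \<open>finite J\<close> j
      by (intro member_le_sum[where f = "\<lambda>j. exp (\<theta> * Y j x) + exp ((- \<theta>) * Y j x)", THEN order.trans[rotated]])
         (auto simp: abs_if add_increasing add_increasing2)
    finally show ?thesis
      using \<open>0 < \<theta>\<close> j by (simp add: field_simps mult_left_mono)
  qed
  then have "(\<integral>\<^sup>+ x. ennreal ((max 0 (Max ((\<lambda>j. \<bar>Y j x\<bar>) ` J) - t)) ^ l) \<partial>M)
      \<le> ennreal (fact l / \<theta> ^ l * exp (- \<theta> * t) * (2 * real (card J) * exp v) + 0)"
    using \<open>0 < \<theta>\<close>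
    by (intro nn_integral_le_affine_bound[OF _ _ _ _ _ _ f_int]) (auto simp: f_def intro!: sum_nonneg)
  then show ?thesis by simp
qed

end

section \<open>Sums over independent coordinates\<close>

lemma nn_integral_binomial:
  assumes g[measurable]: "g \<in> borel_measurable N"
    and g_nonneg: "\<And>y. y \<in> space N \<Longrightarrow> 0 \<le> g y" and "0 \<le> c"
  shows "(\<integral>\<^sup>+ y. ennreal ((c + g y) ^ j) \<partial>N)
    = (\<Sum>m\<le>j. ennreal (real (j choose m)) * ennreal (c ^ m) * (\<integral>\<^sup>+ y. ennreal (g y ^ (j - m)) \<partial>N))"
proof -
  have binomial: "ennreal ((c + g y) ^ j)
      = (\<Sum>m\<le>j. ennreal (real (j choose m)) * ennreal (c ^ m) * ennreal (g y ^ (j - m)))"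
    if "y \<in> space N" for y
  proof -
    have "ennreal ((c + g y) ^ j) = ennreal (\<Sum>m\<le>j. real (j choose m) * c ^ m * g y ^ (j - m))"
      by (simp add: binomial_ring)
    also have "\<dots> = (\<Sum>m\<le>j. ennreal (real (j choose m) * c ^ m * g y ^ (j - m)))"
      using \<open>0 \<le> c\<close> g_nonneg[OF that] by (intro sum_ennreal[symmetric]) auto
    finally show ?thesis
      using \<open>0 \<le> c\<close> g_nonneg[OF that] by (simp add: ennreal_mult)
  qed
  have "(\<integral>\<^sup>+ y. ennreal ((c + g y) ^ j) \<partial>N)
      = (\<Sum>m\<le>j. (\<integral>\<^sup>+ y. ennreal (real (j choose m)) * ennreal (c ^ m) * ennreal (g y ^ (j - m)) \<partial>N))"
    by (simp add: binomial nn_integral_sum cong: nn_integral_cong)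
  also have "\<dots> = (\<Sum>m\<le>j. ennreal (real (j choose m)) * ennreal (c ^ m) * (\<integral>\<^sup>+ y. ennreal (g y ^ (j - m)) \<partial>N))"
    by (intro sum.cong refl nn_integral_cmult) measurable
  finally show ?thesis .
qed

context product_sigma_finite
begin

lemma nn_integral_exp_sum_le:
  assumes "finite K" and g[measurable]: "\<And>i. i \<in> K \<Longrightarrow> g i \<in> borel_measurable (M i)"
    and mgf: "\<And>i. i \<in> K \<Longrightarrow> (\<integral>\<^sup>+ x. ennreal (exp (g i x)) \<partial>M i) \<le> ennreal B"
  shows "(\<integral>\<^sup>+ x. ennreal (exp (\<Sum>i\<in>K. g i (x i))) \<partial>PiM K M) \<le> ennreal B ^ card K"
proof -
  have "(\<integral>\<^sup>+ x. ennreal (exp (\<Sum>i\<in>K. g i (x i))) \<partial>PiM K M)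
      = (\<integral>\<^sup>+ x. (\<Prod>i\<in>K. ennreal (exp (g i (x i)))) \<partial>PiM K M)"
    using \<open>finite K\<close> by (simp add: exp_sum prod_ennreal)
  also have "\<dots> = (\<Prod>i\<in>K. \<integral>\<^sup>+ x. ennreal (exp (g i x)) \<partial>M i)"
    using assms by (intro product_nn_integral_prod) auto
  also have "\<dots> \<le> (\<Prod>i\<in>K. ennreal B)"
    using mgf by (rule prod_mono_ennreal)
  finally show ?thesis by simp
qed

lemma measurable_sum_components:
  assumes "\<And>i. i \<in> K \<Longrightarrow> W i \<in> borel_measurable (M i)" "K \<subseteq> K'"
  shows "(\<lambda>x. \<Sum>i\<in>K. W i (x i) :: real) \<in> borel_measurable (PiM K' M)"
  using assms by (intro borel_measurable_sum measurable_compose[OF measurable_component_singleton]) auto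

lemma nn_integral_power_sum_insert:
  assumes K: "finite K" "i \<notin> K"
    and W: "\<And>k. k \<in> insert i K \<Longrightarrow> W k \<in> borel_measurable (M k)"
    and W_nonneg: "\<And>k y. k \<in> insert i K \<Longrightarrow> y \<in> space (M k) \<Longrightarrow> 0 \<le> W k y"
  shows "(\<integral>\<^sup>+ x. ennreal ((\<Sum>k\<in>insert i K. W k (x k)) ^ j) \<partial>PiM (insert i K) M)
    = (\<Sum>m\<le>j. ennreal (real (j choose m))
          * (\<integral>\<^sup>+ x. ennreal ((\<Sum>k\<in>K. W k (x k)) ^ m) \<partial>PiM K M)
          * (\<integral>\<^sup>+ y. ennreal (W i y ^ (j - m)) \<partial>M i))"
proof -
  define S where "S x = (\<Sum>k\<in>K. W k (x k))" for x
  have S[measurable]: "S \<in> borel_measurable (PiM K M)"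
    unfolding S_def using W by (intro measurable_sum_components) auto
  have Wi[measurable]: "W i \<in> borel_measurable (M i)" using W by simp
  have S_nonneg: "0 \<le> S x" if "x \<in> space (PiM K M)" for x
    unfolding S_def using that W_nonneg by (intro sum_nonneg) (auto simp: space_PiM PiE_iff)
  have "(\<integral>\<^sup>+ x. ennreal ((\<Sum>k\<in>insert i K. W k (x k)) ^ j) \<partial>PiM (insert i K) M)
      = (\<integral>\<^sup>+ x. (\<integral>\<^sup>+ y. ennreal ((S x + W i y) ^ j) \<partial>M i) \<partial>PiM K M)"
  proof -
    have "(\<lambda>x. \<Sum>k\<in>insert i K. W k (x k)) \<in> borel_measurable (PiM (insert i K) M)"
      using W by (intro measurable_sum_components) auto
    moreover have "(\<Sum>k\<in>K. W k ((x(i := y)) k)) = S x" for x y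
      using K by (auto simp: S_def intro!: sum.cong)
    then have "(\<Sum>k\<in>insert i K. W k ((x(i := y)) k)) = S x + W i y" for x y
      using K by (simp add: add.commute)
    ultimately show ?thesis
      using K by (simp add: product_nn_integral_insert add.commute)
  qed
  also have "\<dots> = (\<integral>\<^sup>+ x. (\<Sum>m\<le>j. ennreal (real (j choose m)) * ennreal (S x ^ m)
                        * (\<integral>\<^sup>+ y. ennreal (W i y ^ (j - m)) \<partial>M i)) \<partial>PiM K M)"
    using S_nonneg W_nonneg by (intro nn_integral_cong nn_integral_binomial) auto
  also have "\<dots> = (\<Sum>m\<le>j. (\<integral>\<^sup>+ x. ennreal (real (j choose m)) * ennreal (S x ^ m)
                        * (\<integral>\<^sup>+ y. ennreal (W i y ^ (j - m)) \<partial>M i) \<partial>PiM K M))"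
    by (intro nn_integral_sum) measurable
  also have "\<dots> = (\<Sum>m\<le>j. ennreal (real (j choose m)) * (\<integral>\<^sup>+ x. ennreal (S x ^ m) \<partial>PiM K M)
                        * (\<integral>\<^sup>+ y. ennreal (W i y ^ (j - m)) \<partial>M i))"
    by (intro sum.cong refl) (simp add: nn_integral_cmult nn_integral_multc)
  finally show ?thesis
    by (simp add: S_def)
qed

end

lemma (in product_prob_space) nn_integral_power_sum_le:
  assumes "finite K"
    and W: "\<And>i. i \<in> K \<Longrightarrow> W i \<in> borel_measurable (M i)"
    and W_nonneg: "\<And>i y. i \<in> K \<Longrightarrow> y \<in> space (M i) \<Longrightarrow> 0 \<le> W i y"
    and moment: "\<And>i m. i \<in> K \<Longrightarrow> 1 \<le> m \<Longrightarrow> m \<le> L \<Longrightarrow> (\<integral>\<^sup>+ y. ennreal (W i y ^ m) \<partial>M i) \<le> ennreal q"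
    and "0 \<le> q" "j \<le> L"
  shows "(\<integral>\<^sup>+ x. ennreal ((\<Sum>i\<in>K. W i (x i)) ^ j) \<partial>PiM K M) \<le> ennreal ((real (card K) * q + real j) ^ j)"
  using assms
proof (induction K arbitrary: j rule: finite_induct)
  case empty
  then show ?case by (subst nn_integral_empty) (auto simp: power_0_left)
next
  case (insert i K)
  define b where "b r = (if r = 0 then 1 else q)" for r :: nat
  have moment_i: "(\<integral>\<^sup>+ y. ennreal (W i y ^ r) \<partial>M i) \<le> ennreal (b r)" if "r \<le> L" for r
    using insert.prems(3)[of i r] that by (cases "r = 0") (auto simp: b_def M.emeasure_space_1)
  have "(\<integral>\<^sup>+ x. ennreal ((\<Sum>k\<in>insert i K. W k (x k)) ^ j) \<partial>PiM (insert i K) M)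
      = (\<Sum>m\<le>j. ennreal (real (j choose m))
          * (\<integral>\<^sup>+ x. ennreal ((\<Sum>k\<in>K. W k (x k)) ^ m) \<partial>PiM K M)
          * (\<integral>\<^sup>+ y. ennreal (W i y ^ (j - m)) \<partial>M i))"
    using insert.prems by (intro nn_integral_power_sum_insert insert.hyps) auto
  also have "\<dots> \<le> (\<Sum>m\<le>j. ennreal (real (j choose m)) * ennreal ((real (card K) * q + real m) ^ m) * ennreal (b (j - m)))"
    using insert.prems by (intro sum_mono mult_mono order.refl insert.IH moment_i) auto
  also have "\<dots> = ennreal (\<Sum>m\<le>j. real (j choose m) * (real (card K) * q + real m) ^ m * b (j - m))"
    using \<open>0 \<le> q\<close> by (subst sum_ennreal[symmetric]) (auto simp: b_def ennreal_mult)
  also have "(\<Sum>m\<le>j. real (j choose m) * (real (card K) * q + real m) ^ m * b (j - m))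
      = (real (card K) * q + real j) ^ j + q * (\<Sum>m<j. real (j choose m) * (real (card K) * q + real m) ^ m)"
    by (auto simp: lessThan_Suc_atMost[symmetric] b_def sum_distrib_left mult_ac intro!: sum.cong)
  also have "\<dots> \<le> (real (card (insert i K)) * q + real j) ^ j"
    using binomial_moment_recursion[of "real (card K) * q" q j] insert.hyps \<open>0 \<le> q\<close>
    by (simp add: algebra_simps)
  finally show ?case
    by (simp add: ennreal_leI)
qed

section \<open>Truncation of a centered family with an envelope\<close>

locale centered_envelope = product_prob_space M I for M :: "'i \<Rightarrow> 'a measure" and I +
  fixes J :: "'j set" and Z :: "'i \<Rightarrow> 'j \<Rightarrow> 'a \<Rightarrow> real" and E :: "'i \<Rightarrow> 'a \<Rightarrow> real"
    and p B :: real
  assumes finite_I: "finite I" and I_nonempty: "I \<noteq> {}"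
    and finite_J: "finite J" and J_nonempty: "J \<noteq> {}"
    and Z_measurable[measurable]: "\<And>i j. i \<in> I \<Longrightarrow> j \<in> J \<Longrightarrow> Z i j \<in> borel_measurable (M i)"
    and E_measurable[measurable]: "\<And>i. i \<in> I \<Longrightarrow> E i \<in> borel_measurable (M i)"
    and envelope: "\<And>i j x. i \<in> I \<Longrightarrow> j \<in> J \<Longrightarrow> x \<in> space (M i) \<Longrightarrow> \<bar>Z i j x\<bar> \<le> E i x"
    and moment: "\<And>i. i \<in> I \<Longrightarrow> (\<integral>\<^sup>+ x. ennreal (E i x powr p) \<partial>M i) \<le> ennreal (B powr p)"
    and centered: "\<And>i j. i \<in> I \<Longrightarrow> j \<in> J \<Longrightarrow> (\<integral> x. Z i j x \<partial>M i) = 0"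
    and p_ge_2: "2 \<le> p" and B_pos: "0 < B"
begin

definition max_abs_mean :: "('i \<Rightarrow> 'a) \<Rightarrow> real" where
  "max_abs_mean w = Max ((\<lambda>j. \<bar>(1 / real (card I)) * (\<Sum>i\<in>I. Z i j (w i))\<bar>) ` J)"

definition truncated :: "real \<Rightarrow> 'i \<Rightarrow> 'j \<Rightarrow> 'a \<Rightarrow> real" where
  "truncated T i j x = (if E i x \<le> T then Z i j x else 0)"

definition tail :: "real \<Rightarrow> 'i \<Rightarrow> 'a \<Rightarrow> real" where
  "tail T i x = (if T < E i x then E i x else 0)"

definition centered_mean :: "real \<Rightarrow> 'j \<Rightarrow> ('i \<Rightarrow> 'a) \<Rightarrow> real" where
  "centered_mean T j w = (\<Sum>i\<in>I. truncated T i j (w i) - (\<integral> y. truncated T i j y \<partial>M i)) / real (card I)"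

definition tail_mean :: "real \<Rightarrow> ('i \<Rightarrow> 'a) \<Rightarrow> real" where
  "tail_mean T w = (\<Sum>i\<in>I. tail T i (w i)) / real (card I)"

lemma card_I_pos: "0 < real (card I)"
  using finite_I I_nonempty by (simp add: card_gt_0_iff)

lemma truncated_measurable[measurable]:
  "i \<in> I \<Longrightarrow> j \<in> J \<Longrightarrow> truncated T i j \<in> borel_measurable (M i)"
  unfolding truncated_def by measurable

lemma tail_measurable[measurable]: "i \<in> I \<Longrightarrow> tail T i \<in> borel_measurable (M i)"
  unfolding tail_def by measurable

lemma centered_mean_measurable[measurable]:
  "j \<in> J \<Longrightarrow> centered_mean T j \<in> borel_measurable (PiM I M)"
  unfolding centered_mean_def by (intro borel_measurable_divide measurable_sum_components) auto

lemma tail_mean_measurable[measurable]: "tail_mean T \<in> borel_measurable (PiM I M)"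
  unfolding tail_mean_def by (intro borel_measurable_divide measurable_sum_components) auto

lemma tail_mean_nonneg: "0 \<le> T \<Longrightarrow> 0 \<le> tail_mean T w"
  unfolding tail_mean_def tail_def by (auto intro!: sum_nonneg divide_nonneg_nonneg)

lemma abs_truncated_le: "i \<in> I \<Longrightarrow> j \<in> J \<Longrightarrow> x \<in> space (M i) \<Longrightarrow> 0 \<le> T \<Longrightarrow> \<bar>truncated T i j x\<bar> \<le> T"
  using envelope[of i j x] by (auto simp: truncated_def)

lemma abs_integral_truncated_le:
  "i \<in> I \<Longrightarrow> j \<in> J \<Longrightarrow> 0 < T \<Longrightarrow> \<bar>\<integral> x. truncated T i j x \<partial>M i\<bar> \<le> T * (B / T) powr p"
  unfolding truncated_def using envelope centered moment B_pos p_ge_2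
  by (intro M.abs_truncated_mean_le) auto

lemma integral_truncated_square_le:
  assumes "i \<in> I" "j \<in> J" "0 \<le> T"
  shows "(\<integral> x. (truncated T i j x)\<^sup>2 \<partial>M i) \<le> B\<^sup>2"
proof -
  have bounded: "\<bar>truncated T i j x\<bar> \<le> T" "\<bar>truncated T i j x\<bar> \<le> E i x" if "x \<in> space (M i)" for x
    using envelope[OF assms(1,2) that] assms by (auto simp: truncated_def)
  have "integrable (M i) (\<lambda>x. (truncated T i j x)\<^sup>2)"
    using assms power_mono[OF bounded(1) abs_ge_zero, of _ 2]
    by (intro M.integrable_const_bound[where B = "T\<^sup>2"]) auto
  then have "ennreal (\<integral> x. (truncated T i j x)\<^sup>2 \<partial>M i) = (\<integral>\<^sup>+ x. ennreal ((truncated T i j x)\<^sup>2) \<partial>M i)"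
    by (intro nn_integral_eq_integral[symmetric]) auto
  also have "\<dots> \<le> (\<integral>\<^sup>+ x. ennreal ((E i x)\<^sup>2) \<partial>M i)"
    using power_mono[OF bounded(2) abs_ge_zero, of _ 2] by (intro nn_integral_mono ennreal_leI) auto
  also have "\<dots> \<le> ennreal (B\<^sup>2)"
    using assms envelope[OF assms(1,2)] moment p_ge_2 B_pos
    by (intro M.nn_integral_square_le_of_moment) (auto intro: order.trans[OF abs_ge_zero])
  finally show ?thesis
    by (simp add: ennreal_le_iff)
qed

lemma max_abs_mean_le:
  assumes w: "w \<in> space (PiM I M)" and "0 < T"
  shows "max_abs_mean w \<le> Max ((\<lambda>j. \<bar>centered_mean T j w\<bar>) ` J) + T * (B / T) powr p + tail_mean T w"
proof -
  have w_i: "w i \<in> space (M i)" if "i \<in> I" for i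
    using w that by (auto simp: space_PiM)
  have "max_abs_mean w \<in> (\<lambda>j. \<bar>(1 / real (card I)) * (\<Sum>i\<in>I. Z i j (w i))\<bar>) ` J"
    unfolding max_abs_mean_def using finite_J J_nonempty by (intro Max_in) auto
  then obtain j where j: "j \<in> J" and max_eq: "max_abs_mean w = \<bar>\<Sum>i\<in>I. Z i j (w i)\<bar> / real (card I)"
    using card_I_pos by (auto simp: abs_mult)
  define \<mu> where "\<mu> i = (\<integral> y. truncated T i j y \<partial>M i)" for i
  have "(\<Sum>i\<in>I. Z i j (w i))
      = (\<Sum>i\<in>I. truncated T i j (w i) - \<mu> i) + (\<Sum>i\<in>I. \<mu> i) + (\<Sum>i\<in>I. Z i j (w i) - truncated T i j (w i))"
    by (simp add: sum_subtractf)
  then have "\<bar>\<Sum>i\<in>I. Z i j (w i)\<bar>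
      \<le> \<bar>\<Sum>i\<in>I. truncated T i j (w i) - \<mu> i\<bar> + (\<Sum>i\<in>I. \<bar>\<mu> i\<bar>) + (\<Sum>i\<in>I. \<bar>Z i j (w i) - truncated T i j (w i)\<bar>)"
    using abs_triangle_ineq[of "(\<Sum>i\<in>I. truncated T i j (w i) - \<mu> i) + (\<Sum>i\<in>I. \<mu> i)"]
      abs_triangle_ineq[of "\<Sum>i\<in>I. truncated T i j (w i) - \<mu> i"]
      sum_abs[of \<mu> I] sum_abs[of "\<lambda>i. Z i j (w i) - truncated T i j (w i)" I]
    by linarith
  also have "\<dots> \<le> real (card I) * \<bar>centered_mean T j w\<bar> + real (card I) * (T * (B / T) powr p) + (\<Sum>i\<in>I. tail T i (w i))"
  proof (intro add_mono)
    show "\<bar>\<Sum>i\<in>I. truncated T i j (w i) - \<mu> i\<bar> \<le> real (card I) * \<bar>centered_mean T j w\<bar>"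
      using card_I_pos by (simp add: centered_mean_def \<mu>_def abs_divide)
    show "(\<Sum>i\<in>I. \<bar>\<mu> i\<bar>) \<le> real (card I) * (T * (B / T) powr p)"
      using sum_mono[of I "\<lambda>i. \<bar>\<mu> i\<bar>" "\<lambda>_. T * (B / T) powr p"] abs_integral_truncated_le j \<open>0 < T\<close>
      by (simp add: \<mu>_def)
    show "(\<Sum>i\<in>I. \<bar>Z i j (w i) - truncated T i j (w i)\<bar>) \<le> (\<Sum>i\<in>I. tail T i (w i))"
      using envelope j w_i by (intro sum_mono) (auto simp: truncated_def tail_def)
  qed
  finally have "max_abs_mean w \<le> \<bar>centered_mean T j w\<bar> + T * (B / T) powr p + tail_mean T w"
    using card_I_pos by (simp add: max_eq tail_mean_def divide_le_eq add_divide_distrib algebra_simps)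
  also have "\<bar>centered_mean T j w\<bar> \<le> Max ((\<lambda>j. \<bar>centered_mean T j w\<bar>) ` J)"
    using finite_J j by (intro Max_ge) auto
  finally show ?thesis by simp
qed

corollary excess_max_abs_mean_le:
  assumes "w \<in> space (PiM I M)" "0 < T" "0 \<le> \<delta>"
  shows "max 0 (max_abs_mean w - c)
    \<le> max 0 (Max ((\<lambda>j. \<bar>centered_mean T j w\<bar>) ` J) - (c + \<delta>)) + tail_mean T w + (T * (B / T) powr p + \<delta>)"
proof -
  have "0 \<le> tail_mean T w" "0 \<le> T * (B / T) powr p"
    using assms tail_mean_nonneg by auto
  then show ?thesis
    using max_abs_mean_le[OF assms(1,2)] \<open>0 \<le> \<delta>\<close> unfolding max_def by auto
qed

lemma nn_integral_exp_centered_mean_le: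
  assumes "j \<in> J" "0 \<le> T" "0 \<le> C"
    and exp_bound: "\<And>y. \<bar>y\<bar> \<le> \<kappa> \<Longrightarrow> exp y \<le> 1 + y + C * y\<^sup>2"
    and s: "\<bar>s\<bar> * (2 * T) \<le> \<kappa> * real (card I)"
  shows "(\<integral>\<^sup>+ w. ennreal (exp (s * centered_mean T j w)) \<partial>PiM I M)
    \<le> ennreal (exp (C * s\<^sup>2 * B\<^sup>2 / real (card I)))"
proof -
  define \<sigma> where "\<sigma> = s / real (card I)"
  have "\<bar>\<sigma>\<bar> * (2 * T) \<le> \<kappa>"
    using s card_I_pos by (simp add: \<sigma>_def abs_divide field_simps)
  have "(\<integral>\<^sup>+ w. ennreal (exp (s * centered_mean T j w)) \<partial>PiM I M)
      = (\<integral>\<^sup>+ w. ennreal (exp (\<Sum>i\<in>I. \<sigma> * (truncated T i j (w i) - (\<integral> y. truncated T i j y \<partial>M i)))) \<partial>PiM I M)"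
    by (simp add: centered_mean_def \<sigma>_def sum_distrib_left sum_divide_distrib)
  also have "\<dots> \<le> ennreal (exp (C * \<sigma>\<^sup>2 * B\<^sup>2)) ^ card I"
    using assms \<open>\<bar>\<sigma>\<bar> * (2 * T) \<le> \<kappa>\<close> abs_truncated_le integral_truncated_square_le
    by (intro nn_integral_exp_sum_le finite_I M.nn_integral_exp_centered_le) auto
  also have "\<dots> = ennreal (exp (C * s\<^sup>2 * B\<^sup>2 / real (card I)))"
    using card_I_pos
    by (simp add: ennreal_power exp_of_nat_mult[symmetric] \<sigma>_def power_divide power2_eq_square field_simps)
  finally show ?thesis .
qed

lemma nn_integral_tail_mean_power_le:
  assumes "1 \<le> l" "real l \<le> p" "0 < T"
  shows "(\<integral>\<^sup>+ w. ennreal (tail_mean T w ^ l) \<partial>PiM I M)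
    \<le> ennreal ((T * (real (card I) * (B / T) powr p + real l) / real (card I)) ^ l)"
proof -
  have "(\<integral>\<^sup>+ w. ennreal (tail_mean T w ^ l) \<partial>PiM I M)
      = (\<integral>\<^sup>+ w. ennreal ((T / real (card I)) ^ l) * ennreal ((\<Sum>i\<in>I. tail T i (w i) / T) ^ l) \<partial>PiM I M)"
  proof (intro nn_integral_cong)
    fix w
    have "0 \<le> (\<Sum>i\<in>I. tail T i (w i) / T)"
      using \<open>0 < T\<close> by (intro sum_nonneg) (auto simp: tail_def)
    moreover have "tail_mean T w = T / real (card I) * (\<Sum>i\<in>I. tail T i (w i) / T)"
      using \<open>0 < T\<close> by (simp add: tail_mean_def sum_divide_distrib[symmetric])
    ultimately show "ennreal (tail_mean T w ^ l)
        = ennreal ((T / real (card I)) ^ l) * ennreal ((\<Sum>i\<in>I. tail T i (w i) / T) ^ l)"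
      using \<open>0 < T\<close> by (simp only: power_mult_distrib) (intro ennreal_mult; simp)
  qed
  also have "\<dots> = ennreal ((T / real (card I)) ^ l) * (\<integral>\<^sup>+ w. ennreal ((\<Sum>i\<in>I. tail T i (w i) / T) ^ l) \<partial>PiM I M)"
    using finite_I by (intro nn_integral_cmult measurable_sum_components) auto
  also have "\<dots> \<le> ennreal ((T / real (card I)) ^ l) * ennreal ((real (card I) * (B / T) powr p + real l) ^ l)"
  proof (intro mult_left_mono nn_integral_power_sum_le[where L = l] finite_I)
    fix i m assume "i \<in> I" "1 \<le> m" "m \<le> l"
    then show "(\<integral>\<^sup>+ y. ennreal ((tail T i y / T) ^ m) \<partial>M i) \<le> ennreal ((B / T) powr p)"
      using assms moment B_pos unfolding tail_def by (intro M.nn_integral_tail_power_le) auto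
  qed (use \<open>0 < T\<close> in \<open>auto simp: tail_def\<close>)
  also have "\<dots> = ennreal ((T * (real (card I) * (B / T) powr p + real l) / real (card I)) ^ l)"
    using \<open>0 < T\<close> by (simp add: ennreal_mult[symmetric] power_mult_distrib[symmetric] field_simps)
  finally show ?thesis .
qed

lemma nn_integral_excess_max_centered_mean_le:
  assumes "1 \<le> l" "0 < A" "1 \<le> \<kappa>" "0 \<le> C"
    and exp_bound: "\<And>y. \<bar>y\<bar> \<le> \<kappa> \<Longrightarrow> exp y \<le> 1 + y + C * y\<^sup>2"
  shows "(\<integral>\<^sup>+ w. ennreal ((max 0 (Max ((\<lambda>j. \<bar>centered_mean (A * B / 2) j w\<bar>) ` J)
              - (A * B * ln (2 * real (card J)) / real (card I) + C * \<kappa> * B / A))) ^ l) \<partial>PiM I M)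
    \<le> ennreal (fact l / (real (card I) * \<kappa> / (A * B)) ^ l)"
proof -
  define n where "n = real (card I)"
  define \<theta> where "\<theta> = n * \<kappa> / (A * B)"
  define t where "t = A * B * ln (2 * real (card J)) / n + C * \<kappa> * B / A"
  define v where "v = C * \<theta>\<^sup>2 * B\<^sup>2 / n"
  have "0 < n" "0 < \<theta>"
    using card_I_pos assms B_pos by (auto simp: n_def \<theta>_def)
  have maximal: "(\<integral>\<^sup>+ w. ennreal ((max 0 (Max ((\<lambda>j. \<bar>centered_mean (A * B / 2) j w\<bar>) ` J) - t)) ^ l) \<partial>PiM I M)
      \<le> ennreal (fact l / \<theta> ^ l * exp (- \<theta> * t) * (2 * real (card J) * exp v))"
  proof (intro P.nn_integral_excess_max_abs_power_le finite_J J_nonempty centered_mean_measurable)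
    fix j s assume "j \<in> J" "\<bar>s\<bar> = \<theta>"
    moreover have "\<theta> * (2 * (A * B / 2)) = \<kappa> * n"
      using assms B_pos by (simp add: \<theta>_def)
    ultimately show "(\<integral>\<^sup>+ w. ennreal (exp (s * centered_mean (A * B / 2) j w)) \<partial>PiM I M) \<le> ennreal (exp v)"
      using nn_integral_exp_centered_mean_le[of j "A * B / 2" C \<kappa> s] assms B_pos
      by (simp add: v_def n_def power2_abs[of s, symmetric])
  qed (use assms \<open>0 < \<theta>\<close> in auto)
  txt \<open>Since \<open>\<theta> t = \<kappa> log(2N) + v\<close>, the union bound over the \<open>2N\<close> exponentials costs only
    \<open>(2N)\<^bsup>1 - \<kappa>\<^esup> \<le> 1\<close>.\<close>
  have "exp (- \<theta> * t) * (2 * real (card J) * exp v) = exp ((1 - \<kappa>) * ln (2 * real (card J)))"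
    using \<open>0 < n\<close> assms B_pos finite_J J_nonempty
    by (simp add: t_def v_def \<theta>_def exp_add[symmetric] exp_diff left_diff_distrib power2_eq_square
        field_simps card_gt_0_iff)
  also have "\<dots> \<le> 1"
  proof -
    have "1 \<le> 2 * real (card J)"
      using finite_J J_nonempty card_gt_0_iff[of J] by linarith
    then show ?thesis
      using assms by (simp add: mult_nonpos_nonneg)
  qed
  finally have "exp (- \<theta> * t) * (2 * real (card J) * exp v) \<le> 1" .
  then have "fact l / \<theta> ^ l * exp (- \<theta> * t) * (2 * real (card J) * exp v) \<le> fact l / \<theta> ^ l"
    using mult_left_le[of _ "fact l / \<theta> ^ l"] \<open>0 < \<theta>\<close> by (simp add: mult.assoc)
  with maximal show ?thesis
    by (simp add: t_def n_def \<theta>_def) (meson ennreal_leI order.trans)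
qed

lemma nn_integral_excess_max_abs_mean_le_of_exp_bound:
  assumes "1 \<le> l" "real l \<le> p" "0 < A" "1 \<le> \<kappa>" "0 \<le> C"
    and exp_bound: "\<And>y. \<bar>y\<bar> \<le> \<kappa> \<Longrightarrow> exp y \<le> 1 + y + C * y\<^sup>2"
  shows "(\<integral>\<^sup>+ w. ennreal ((max 0 (max_abs_mean w - A * B * ln (2 * real (card J)) / real (card I))) ^ l)
            \<partial>PiM I M)
    \<le> ennreal ((fact l powr (1 / real l) * A / (real (card I) * \<kappa>) + 2 * (2 / A) powr (p - 1)
                  + real l * A / (2 * real (card I)) + C * \<kappa> / A) ^ l * B ^ l)"
proof -
  define n where "n = real (card I)"
  define T where "T = A * B / 2"
  define c where "c = A * B * ln (2 * real (card J)) / n"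
  define \<delta> where "\<delta> = C * \<kappa> * B / A"
  define a where "a = fact l powr (1 / real l) / (n * \<kappa> / (A * B))"
  define b where "b = T * (n * (B / T) powr p + real l) / n"
  define k where "k = T * (B / T) powr p + \<delta>"
  have "0 < n" "0 < T"
    using card_I_pos assms B_pos by (auto simp: n_def T_def)
  have tail_term: "T * (B / T) powr p = B * (2 / A) powr (p - 1)"
    using assms B_pos
    by (simp add: T_def powr_diff powr_divide field_simps)
  have "(\<integral>\<^sup>+ w. ennreal ((max 0 (max_abs_mean w - c)) ^ l) \<partial>PiM I M) \<le> ennreal ((a + b + k) ^ l)"
  proof (rule P.nn_integral_power_le_of_decomposition)
    show "max 0 (max_abs_mean w - c) \<le> max 0 (Max ((\<lambda>j. \<bar>centered_mean T j w\<bar>) ` J) - (c + \<delta>)) + tail_mean T w + k"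
      if "w \<in> space (PiM I M)" for w
      using excess_max_abs_mean_le[OF that \<open>0 < T\<close>] assms B_pos by (simp add: k_def \<delta>_def)
    show "(\<integral>\<^sup>+ w. ennreal (max 0 (Max ((\<lambda>j. \<bar>centered_mean T j w\<bar>) ` J) - (c + \<delta>)) ^ l) \<partial>PiM I M)
        \<le> ennreal (a ^ l)"
      using nn_integral_excess_max_centered_mean_le[OF \<open>1 \<le> l\<close> \<open>0 < A\<close> \<open>1 \<le> \<kappa>\<close> \<open>0 \<le> C\<close> exp_bound]
        fact_root_power[OF \<open>1 \<le> l\<close>]
      by (simp add: a_def c_def \<delta>_def T_def n_def power_divide power_mult_distrib)
    show "(\<integral>\<^sup>+ w. ennreal (tail_mean T w ^ l) \<partial>PiM I M) \<le> ennreal (b ^ l)"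
      using nn_integral_tail_mean_power_le[OF \<open>1 \<le> l\<close> \<open>real l \<le> p\<close> \<open>0 < T\<close>] by (simp add: b_def n_def)
    show "(\<lambda>w. max 0 (Max ((\<lambda>j. \<bar>centered_mean T j w\<bar>) ` J) - (c + \<delta>))) \<in> borel_measurable (PiM I M)"
      using finite_J by measurable
    show "0 < b"
      using assms \<open>0 < n\<close> \<open>0 < T\<close> by (simp add: b_def add_nonneg_pos)
    show "0 < a"
      using assms B_pos \<open>0 < n\<close> fact_root_bounds[OF \<open>1 \<le> l\<close>] by (simp add: a_def)
    show "0 \<le> k"
      using assms B_pos \<open>0 < T\<close> by (simp add: k_def \<delta>_def)
    show "tail_mean T \<in> borel_measurable (PiM I M)"
      by measurable
    show "0 \<le> max 0 (Max ((\<lambda>j. \<bar>centered_mean T j w\<bar>) ` J) - (c + \<delta>)) \<and> 0 \<le> tail_mean T w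
        \<and> 0 \<le> max 0 (max_abs_mean w - c)" for w
      using \<open>0 < T\<close> tail_mean_nonneg by simp
  qed
  also have "a + b + k = (fact l powr (1 / real l) * A / (n * \<kappa>) + 2 * (2 / A) powr (p - 1)
                  + real l * A / (2 * n) + C * \<kappa> / A) * B"
  proof -
    have "a = fact l powr (1 / real l) * A / (n * \<kappa>) * B"
      using \<open>0 < n\<close> assms by (simp add: a_def)
    moreover have "b = T * (B / T) powr p + T * real l / n"
      using \<open>0 < n\<close> by (simp add: b_def field_simps)
    moreover have "T * real l / n = real l * A / (2 * n) * B"
      by (simp add: T_def)
    moreover have "k = T * (B / T) powr p + C * \<kappa> / A * B"
      by (simp add: k_def \<delta>_def)
    ultimately show ?thesis
      unfolding tail_term by (simp add: algebra_simps)
  qed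
  finally show ?thesis
    by (simp add: c_def n_def power_mult_distrib)
qed

theorem nn_integral_excess_max_abs_mean_le:
  assumes "1 \<le> l" "real l \<le> p" "0 < A"
  shows "(\<integral>\<^sup>+ w. ennreal ((max 0 (max_abs_mean w - A * B * ln (2 * real (card J)) / real (card I))) ^ l)
            \<partial>PiM I M)
    \<le> ennreal ((2 * (2 / A) powr (p - 1) + fact l powr (1 / real l) * sqrt (2 / real (card I))
                  + 1 / A + real l * A / real (card I)) ^ l * B ^ l)"
proof -
  obtain \<kappa> C where params: "1 \<le> \<kappa>" "0 \<le> C" "\<And>y. \<bar>y\<bar> \<le> \<kappa> \<Longrightarrow> exp y \<le> 1 + y + C * y\<^sup>2"
    and arithmetic: "fact l powr (1 / real l) * A / (real (card I) * \<kappa>) + real l * A / (2 * real (card I))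
        + C * \<kappa> / A \<le> fact l powr (1 / real l) * sqrt (2 / real (card I)) + 1 / A + real l * A / real (card I)"
    using exp_quadratic_bound_parameters[OF card_I_pos \<open>0 < A\<close> fact_root_bounds[OF \<open>1 \<le> l\<close>]] by blast
  have "0 \<le> fact l powr (1 / real l) * A / (real (card I) * \<kappa>) + 2 * (2 / A) powr (p - 1)
      + real l * A / (2 * real (card I)) + C * \<kappa> / A"
    using assms params card_I_pos by simp
  then have "(fact l powr (1 / real l) * A / (real (card I) * \<kappa>) + 2 * (2 / A) powr (p - 1)
        + real l * A / (2 * real (card I)) + C * \<kappa> / A) ^ l * B ^ l
      \<le> (2 * (2 / A) powr (p - 1) + fact l powr (1 / real l) * sqrt (2 / real (card I))
        + 1 / A + real l * A / real (card I)) ^ l * B ^ l"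
    using arithmetic B_pos by (intro mult_right_mono power_mono) auto
  with nn_integral_excess_max_abs_mean_le_of_exp_bound[OF assms params] show ?thesis
    by (meson ennreal_leI order.trans)
qed

end

theorem lemma5p7:
  fixes Mi :: "nat \<Rightarrow> 'a measure"
    and Z :: "nat \<Rightarrow> nat \<Rightarrow> 'a \<Rightarrow> real"
    and E :: "nat \<Rightarrow> 'a \<Rightarrow> real"
    and n N l :: nat and p M A :: real
  assumes n_pos: "n \<ge> 1" and N_pos: "N \<ge> 1"
    and prob: "\<And>i. i \<in> {1..n} \<Longrightarrow> prob_space (Mi i)"
    and Z_meas: "\<And>i j. i \<in> {1..n} \<Longrightarrow> j \<in> {1..N} \<Longrightarrow> Z i j \<in> borel_measurable (Mi i)"
    and E_meas: "\<And>i. i \<in> {1..n} \<Longrightarrow> E i \<in> borel_measurable (Mi i)"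
    and env: "\<And>i j x. i \<in> {1..n} \<Longrightarrow> j \<in> {1..N} \<Longrightarrow> x \<in> space (Mi i) \<Longrightarrow> \<bar>Z i j x\<bar> \<le> E i x"
    and p_ge: "p \<ge> 2" and M_pos: "M > 0"
    and moment: "\<And>i. i \<in> {1..n} \<Longrightarrow> (\<integral>\<^sup>+ x. ennreal (E i x powr p) \<partial>Mi i) \<le> ennreal (M powr p)"
    and centered: "\<And>i j. i \<in> {1..n} \<Longrightarrow> j \<in> {1..N} \<Longrightarrow> (\<integral> x. Z i j x \<partial>Mi i) = 0"
    and l_pos: "l \<ge> 1" and l_le_p: "real l \<le> p" and A_ge: "A \<ge> 2"
  shows "(\<integral>\<^sup>+ w. ennreal ((max 0 (maxmean n N Z w - A * M * ln (2 * real N) / real n)) ^ l)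
            \<partial>(PiM {1..n} Mi))
         \<le> ennreal ((2 * (2 / A) powr (p - 1) + fact l powr (1 / real l) * sqrt (2 / real n)
                      + 1 / A + real l * A / real n) ^ l * M ^ l)"
proof -
  txt \<open>The product locale needs probability spaces at every index, so extend \<open>Mi\<close> by point masses.\<close>
  define Mi' where "Mi' i = (if i \<in> {1..n} then Mi i else return (count_space UNIV) undefined)" for i
  have "product_prob_space Mi'"
    unfolding product_prob_space_def product_prob_space_axioms_def product_sigma_finite_def
    using prob by (auto simp: Mi'_def prob_space_return intro: prob_space_imp_sigma_finite)
  moreover have "centered_envelope_axioms Mi' {1..n} {1..N} Z E p M"
    unfolding centered_envelope_axioms_def Mi'_def
    using n_pos N_pos Z_meas E_meas env p_ge M_pos moment centered by simp
  ultimately interpret centered_envelope Mi' "{1..n}" "{1..N}" Z E p M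
    by (intro centered_envelope.intro)
  have "PiM {1..n} Mi = PiM {1..n} Mi'"
    by (intro PiM_cong) (auto simp: Mi'_def)
  moreover have "maxmean n N Z w = max_abs_mean w" for w
    unfolding maxmean_def max_abs_mean_def by simp
  ultimately show ?thesis
    using nn_integral_excess_max_abs_mean_le[OF l_pos l_le_p] A_ge by simp
qed

end
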